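(* Let $J_-,J_+\subset\mathbb Z$ be disjoint finite arithmetic progressions with the same common difference and $J=J_-\cup J_+$. If $\mathcal D\in\mathrm{DO}_n(J)$ corresponds to a generic twisted $J$-corrugated $n$-gon and $\tilde{\mathcal D}\in\mathrm{DO}_n(J)$ satisfies $\tilde{\mathcal D}_+\mathcal D_-=\tilde{\mathcal D}_-\mathcal D_+$ (so that $\tilde{\mathcal D}$ corresponds to the image under the pentagram map associated with $(J_-,J_+)$), then $$\tilde{\mathcal L}(z)=\tilde{\mathcal D}_-(z)^{-1}\tilde{\mathcal D}_+(z)=\mathcal D_+(z)\mathcal D_-(z)^{-1}.$$ Thus, in terms of the Lax operator $\mathcal L(z)=\mathcal D_-(z)^{-1}\mathcal D_+(z)$ (as an element of $\widetilde{\mathrm{GL}}_n/(\mathrm{Ad}\,\mathbb T\times\mathbb R^* )$), the pentagram map is the refactorization $\mathcal D_-^{-1}(z)\mathcal D_+(z)\mapsto\mathcal D_+(z)\mathcal D_-^{-1}(z)$, i.e. it admits the Lax representation with spectral parameter $\mathcal L(z)\mapsto\mathcal D_+(z)\mathcal L(z)\mathcal D_+(z)^{-1}$.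
   Context: A scalar operator is a bi-infinite real sequence $a=(a_i)$ acting by $(aV)_i=a_iV_i$; $T$ is the left shift. An $n$-periodic difference operator is a finite sum $\sum_j a^{(j)}T^j$ with $n$-periodic coefficients; $\mathrm{DO}_n(J)$ consists of those of the form $\sum_{j\in J}a^{(j)}T^j$; for such $\mathcal D$, $\mathcal D_\pm=\sum_{j\in J_\pm}a^{(j)}T^j$. $\mathcal D(z)$ is the matrix Laurent polynomial obtained by sending a scalar operator $a$ to $\mathrm{diag}(a_1,\dots,a_n)$ and $T$ to the matrix with $1$'s at positions $(i,i+1)$ and $z$ at $(n,1)$. $\widetilde{\mathrm{GL}}_n$ is the group of invertible matrix-valued rational functions of $z$; $\mathrm{Ad}\,\mathbb T$ denotes conjugation by constant invertible diagonal matrices and $\mathbb R^*$ acts by $z\mapsto tz$. For $d=\max J-\min J-1$, a twisted $J$-corrugated $n$-gon is a sequence $v_i\in\mathbb{RP}^d$ with $v_{i+n}=M(v_i)$ ($M$ projective) such that for each $i$ the points $v_{i+j}$, $j\in J$, lie in a projective subspace of dimension $|J|-2$; $\mathcal D$ corresponds to it if $\mathcal DV=0$ for a lift $V$. The pentagram map associated with $(J_-,J_+)$ is $\tilde v_i=\mathrm{span}\{v_{i+j}:j\in J_-\}\cap\mathrm{span}\{v_{i+j}:j\in J_+\}$. *)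

theory Defs
  imports "Jordan_Normal_Form.Determinant"
begin

text \<open>Periodic difference operators are encoded by a coefficient family
  a :: int => int => real, where a j i is the i-th entry of the scalar operator
  a^(j), together with a finite set S of shifts; the operator is
  sum over j in S of a^(j) T^j, with T the left shift, (T V)_i = V_(i+1).\<close>

definition periodic_coeffs :: "nat \<Rightarrow> (int \<Rightarrow> int \<Rightarrow> real) \<Rightarrow> bool" where
  "periodic_coeffs n a \<longleftrightarrow> (\<forall>j i. a j (i + int n) = a j i)"

definition DO_apply :: "(int \<Rightarrow> int \<Rightarrow> real) \<Rightarrow> int set \<Rightarrow> (int \<Rightarrow> real) \<Rightarrow> int \<Rightarrow> real" where
  "DO_apply a S V i = (\<Sum>j\<in>S. a j i * V (i + j))"

text \<open>The matrix Laurent polynomial D(z) of sum_{j in S} a^(j) T^j (evaluated at z /= 0).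
  Row/column k (0-based) corresponds to position k+1; T^j has entry z^q at (p,s)
  when p + j = s + q n, with 1 <= p,s <= n.\<close>
definition DO_mat :: "nat \<Rightarrow> (int \<Rightarrow> int \<Rightarrow> real) \<Rightarrow> int set \<Rightarrow> real \<Rightarrow> real mat" where
  "DO_mat n a S z = mat n n (\<lambda>(p, s).
     (\<Sum>j\<in>{j\<in>S. (int p + j - int s) mod int n = 0}.
        a j (int p + 1) * z powi ((int p + j - int s) div int n)))"

definition mat_inv :: "real mat \<Rightarrow> real mat" where
  "mat_inv A = (SOME B. inverts_mat A B \<and> inverts_mat B A)"

definition arith_prog :: "int set \<Rightarrow> int \<Rightarrow> bool" where
  "arith_prog A k \<longleftrightarrow> (\<exists>a (p::nat). p \<ge> 1 \<and> A = {a + int m * k | m. m < p})"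

definition lin_dep_family :: "nat \<Rightarrow> int set \<Rightarrow> (int \<Rightarrow> real vec) \<Rightarrow> bool" where
  "lin_dep_family m S W \<longleftrightarrow>
     (\<exists>c. (\<exists>j\<in>S. c j \<noteq> 0) \<and> (\<forall>k<m. (\<Sum>j\<in>S. c j * (W j $ k)) = 0))"

text \<open>V is a lift (to R^m, m = d+1) of a twisted n-gon in RP^d: nonzero vectors with
  v_(i+n) = M(v_i) for a projective transformation M (lifted to an invertible matrix).\<close>
definition twisted_lift :: "nat \<Rightarrow> nat \<Rightarrow> (int \<Rightarrow> real vec) \<Rightarrow> bool" where
  "twisted_lift m n V \<longleftrightarrow>
     (\<forall>i. V i \<in> carrier_vec m \<and> V i \<noteq> 0\<^sub>v m) \<and>
     (\<exists>M. M \<in> carrier_mat m m \<and> invertible_mat M \<and>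
        (\<forall>i. \<exists>c. c \<noteq> 0 \<and> V (i + int n) = c \<cdot>\<^sub>v (M *\<^sub>v V i)))"

text \<open>J-corrugated: for each i the points v_(i+j), j in J, lie in a projective subspace
  of dimension |J|-2, i.e. the vectors V_(i+j), j in J, are linearly dependent.\<close>
definition corrugated :: "nat \<Rightarrow> int set \<Rightarrow> (int \<Rightarrow> real vec) \<Rightarrow> bool" where
  "corrugated m J V \<longleftrightarrow> (\<forall>i. lin_dep_family m J (\<lambda>j. V (i + j)))"

text \<open>Genericity: for each i, any |J|-1 of the points v_(i+j), j in J, are in general
  position (their lifts are linearly independent).\<close>
definition generic_corrugated :: "nat \<Rightarrow> int set \<Rightarrow> (int \<Rightarrow> real vec) \<Rightarrow> bool" where
  "generic_corrugated m J V \<longleftrightarrow>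
     corrugated m J V \<and> (\<forall>i. \<forall>j0\<in>J. \<not> lin_dep_family m (J - {j0}) (\<lambda>j. V (i + j)))"

text \<open>The (nondegenerate) operator sum_{j in J} a^(j) T^j corresponds to a generic twisted
  J-corrugated n-gon in RP^d, d = max J - min J - 1: it annihilates some lift V.\<close>
definition corresponds_generic :: "nat \<Rightarrow> int set \<Rightarrow> (int \<Rightarrow> int \<Rightarrow> real) \<Rightarrow> bool" where
  "corresponds_generic n J a \<longleftrightarrow>
     (\<forall>i. \<exists>j\<in>J. a j i \<noteq> 0) \<and>
     (\<exists>V. twisted_lift (nat (Max J - Min J)) n V \<and>
          generic_corrugated (nat (Max J - Min J)) J V \<and>
          (\<forall>k < nat (Max J - Min J). \<forall>i. DO_apply a J (\<lambda>l. V l $ k) i = 0))"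

end

(* The matrix DO_mat n a S z is the operator a on Bloch solutions, i.e. sequences with
   V (i + n) = z * V i, written in the coordinates V 1, ..., V n.  Composition of periodic operators
   preserves Bloch solutions, so the operator identity D~_+ D_- = D~_- D_+ becomes the matrix
   identity D~_+(z) D_-(z) = D~_-(z) D_+(z), and the refactorization is a rearrangement of it.
   D_-(z) is singular for only finitely many z: by the Leibniz formula det D_-(z) is a Laurent
   polynomial whose lowest power z^(min J_-) comes from a single term, with coefficient
   +-prod_i a^(min J_-)_i, and genericity of the polygon forces these coefficients to be nonzero. *)

theory Submission
  imports Defs
begin

definition quasi_periodic :: "nat \<Rightarrow> real \<Rightarrow> (int \<Rightarrow> real) \<Rightarrow> bool" where
  "quasi_periodic n z V \<longleftrightarrow> (\<forall>i. V (i + int n) = z * V i)"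

lemma quasi_periodic_shift:
  assumes "quasi_periodic n z V" "z \<noteq> 0"
  shows "V (i + q * int n) = z powi q * V i"
proof -
  have nat_shift: "V (i + int m * int n) = z ^ m * V i" for i m
  proof (induction m)
    case (Suc m)
    have "V (i + int (Suc m) * int n) = z * V (i + int m * int n)"
      using assms(1) unfolding quasi_periodic_def by (metis add.assoc distrib_right mult_1 of_nat_Suc add.commute)
    then show ?case using Suc by simp
  qed simp
  show ?thesis
  proof (cases "q \<ge> 0")
    case True
    then show ?thesis using nat_shift[of i "nat q"] by (simp add: power_int_def)
  next
    case False
    then obtain m where q: "q = - int m" by (intro that[of "nat (- q)"]) simp
    have "V i = z ^ m * V (i + q * int n)" using nat_shift[of "i + q * int n" m] q by simp
    then show ?thesis using q assms(2) by (simp add: power_int_minus field_simps)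
  qed
qed

lemma quasi_periodic_DO_apply:
  assumes "periodic_coeffs n a" "quasi_periodic n z V"
  shows "quasi_periodic n z (DO_apply a S V)"
proof -
  have "a j (i + int n) * V (i + int n + j) = z * (a j i * V (i + j))" for i j
    using assms unfolding periodic_coeffs_def quasi_periodic_def
    by (metis add.commute add.left_commute mult.left_commute)
  then show ?thesis unfolding quasi_periodic_def DO_apply_def by (simp add: sum_distrib_left)
qed

lemma quasi_periodic_extension:
  assumes "n \<ge> 1" "z \<noteq> 0" "v \<in> carrier_vec n"
  obtains V where "quasi_periodic n z V" "vec n (\<lambda>s. V (int s + 1)) = v"
proof
  define V where "V i = z powi ((i - 1) div int n) * v $ nat ((i - 1) mod int n)" for i
  have "(i + int n - 1) div int n = (i - 1) div int n + 1" for i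
    using assms(1) by (simp add: diff_add_eq[symmetric] div_add_self2)
  moreover have "(i + int n - 1) mod int n = (i - 1) mod int n" for i
    by (simp add: diff_add_eq[symmetric])
  ultimately show "quasi_periodic n z V"
    unfolding quasi_periodic_def V_def using assms(2) by (simp add: power_int_add_1)
  show "vec n (\<lambda>s. V (int s + 1)) = v"
    using assms(3) by (intro eq_vecI) (auto simp: V_def)
qed

lemma quasi_periodic_sum_residue:
  assumes "n \<ge> 1" "z \<noteq> 0" "quasi_periodic n z V"
  shows "(\<Sum>s | s < n \<and> (t - int s) mod int n = 0. z powi ((t - int s) div int n) * V (int s + 1))
    = V (t + 1)"
proof -
  define s0 where "s0 = nat (t mod int n)"
  have s0: "int s0 = t mod int n" using assms(1) by (simp add: s0_def)
  have unique: "s = s0" if "s < n" "(t - int s) mod int n = 0" for s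
  proof -
    have "int n dvd t - int s" using that(2) by (simp add: mod_0_imp_dvd)
    then have "int s mod int n = t mod int n" by (simp add: mod_eq_dvd_iff dvd_diff_commute)
    then show "s = s0" using s0 that(1) by simp
  qed
  have "int s0 < int n" using s0 assms(1) by simp
  moreover have "(t - int s0) mod int n = 0" by (simp only: s0 mod_diff_right_eq) simp
  ultimately have residues: "{s. s < n \<and> (t - int s) mod int n = 0} = {s0}" by (auto dest: unique)
  have "t = int s0 + t div int n * int n" using s0 mod_div_mult_eq[of t "int n"] by linarith
  then have shift: "V (t + 1) = V (int s0 + 1 + t div int n * int n)" by (simp add: ac_simps)
  have "(\<Sum>s | s < n \<and> (t - int s) mod int n = 0. z powi ((t - int s) div int n) * V (int s + 1))
      = z powi ((t - int s0) div int n) * V (int s0 + 1)"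
    unfolding residues by simp
  also have "\<dots> = z powi (t div int n) * V (int s0 + 1)" by (simp add: s0 minus_mod_eq_mult_div)
  also have "\<dots> = V (t + 1)" unfolding shift by (rule quasi_periodic_shift[OF assms(3,2), symmetric])
  finally show ?thesis .
qed

lemma DO_mat_carrier [simp]: "DO_mat n a S z \<in> carrier_mat n n"
  and dim_DO_mat [simp]: "dim_row (DO_mat n a S z) = n" "dim_col (DO_mat n a S z) = n"
  by (simp_all add: DO_mat_def)

lemma DO_mat_mult_vec:
  assumes "n \<ge> 1" "finite S" "z \<noteq> 0" "quasi_periodic n z V"
  shows "DO_mat n a S z *\<^sub>v vec n (\<lambda>s. V (int s + 1)) = vec n (\<lambda>s. DO_apply a S V (int s + 1))"
proof (rule eq_vecI)
  fix p assume "p < dim_vec (vec n (\<lambda>s. DO_apply a S V (int s + 1)))"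
  then have p: "p < n" by simp
  have "(DO_mat n a S z *\<^sub>v vec n (\<lambda>s. V (int s + 1))) $ p
      = (\<Sum>s<n. \<Sum>j | j \<in> S \<and> (int p + j - int s) mod int n = 0.
           a j (int p + 1) * (z powi ((int p + j - int s) div int n) * V (int s + 1)))"
    using p by (simp add: DO_mat_def scalar_prod_def atLeast0LessThan sum_distrib_right mult.assoc)
  also have "\<dots> = (\<Sum>j\<in>S. a j (int p + 1) *
      (\<Sum>s | s < n \<and> (int p + j - int s) mod int n = 0.
         z powi ((int p + j - int s) div int n) * V (int s + 1)))"
    unfolding sum.swap_restrict[OF finite_lessThan assms(2)] by (simp add: sum_distrib_left)
  also have "\<dots> = (\<Sum>j\<in>S. a j (int p + 1) * V (int p + j + 1))"
    by (simp only: quasi_periodic_sum_residue[OF assms(1,3,4)])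
  finally show "(DO_mat n a S z *\<^sub>v vec n (\<lambda>s. V (int s + 1))) $ p
      = vec n (\<lambda>s. DO_apply a S V (int s + 1)) $ p"
    using p by (simp add: DO_apply_def add_ac)
qed simp

lemma eq_mat_mult_vecI:
  fixes A B :: "'a :: semiring_1 mat"
  assumes "A \<in> carrier_mat n m" "B \<in> carrier_mat n m"
    and "\<And>v. v \<in> carrier_vec m \<Longrightarrow> A *\<^sub>v v = B *\<^sub>v v"
  shows "A = B"
proof (rule eq_matI)
  fix i j assume ij: "i < dim_row B" "j < dim_col B"
  have "(A *\<^sub>v unit_vec m j) $ i = (B *\<^sub>v unit_vec m j) $ i" using assms(3) by simp
  then show "A $$ (i, j) = B $$ (i, j)" using ij assms(1,2) by simp
qed (use assms in auto)

lemma DO_mat_mult_eqI: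
  assumes "n \<ge> 1" "z \<noteq> 0" "finite S" "finite T" "finite S'" "finite T'"
    and "periodic_coeffs n a" "periodic_coeffs n a'"
    and "\<And>V. DO_apply b T (DO_apply a S V) = DO_apply b' T' (DO_apply a' S' V)"
  shows "DO_mat n b T z * DO_mat n a S z = DO_mat n b' T' z * DO_mat n a' S' z"
proof (rule eq_mat_mult_vecI[where n = n and m = n])
  fix v :: "real vec" assume "v \<in> carrier_vec n"
  then obtain V where V: "quasi_periodic n z V" and v: "vec n (\<lambda>s. V (int s + 1)) = v"
    using quasi_periodic_extension[OF assms(1,2)] by blast
  have composite: "DO_mat n b T z * DO_mat n a S z *\<^sub>v v
      = vec n (\<lambda>s. DO_apply b T (DO_apply a S V) (int s + 1))"
    if "finite S" "finite T" "periodic_coeffs n a" for a b S T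
  proof -
    have "DO_mat n b T z * DO_mat n a S z *\<^sub>v v = DO_mat n b T z *\<^sub>v (DO_mat n a S z *\<^sub>v v)"
      using \<open>v \<in> carrier_vec n\<close> by (rule assoc_mult_mat_vec[OF DO_mat_carrier DO_mat_carrier])
    also have "\<dots> = vec n (\<lambda>s. DO_apply b T (DO_apply a S V) (int s + 1))"
      unfolding v[symmetric] DO_mat_mult_vec[OF assms(1) that(1) assms(2) V]
      by (rule DO_mat_mult_vec[OF assms(1) that(2) assms(2) quasi_periodic_DO_apply[OF that(3) V]])
    finally show ?thesis .
  qed
  show "DO_mat n b T z * DO_mat n a S z *\<^sub>v v = DO_mat n b' T' z * DO_mat n a' S' z *\<^sub>v v"
    using assms by (simp add: composite)
qed (rule mult_carrier_mat[OF DO_mat_carrier DO_mat_carrier])+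

lemma mat_inv_inverts:
  assumes "A \<in> carrier_mat n n" "invertible_mat A"
  shows "mat_inv A \<in> carrier_mat n n" "A * mat_inv A = 1\<^sub>m n" "mat_inv A * A = 1\<^sub>m n"
proof -
  have "\<exists>B. inverts_mat A B \<and> inverts_mat B A" using assms(2) unfolding invertible_mat_def by blast
  then have "inverts_mat A (mat_inv A) \<and> inverts_mat (mat_inv A) A"
    unfolding mat_inv_def by (rule someI_ex)
  then have right: "A * mat_inv A = 1\<^sub>m n" and left: "mat_inv A * A = 1\<^sub>m (dim_row (mat_inv A))"
    using assms(1) unfolding inverts_mat_def by auto
  have "dim_col (mat_inv A) = n" using right by (metis index_mult_mat(3) index_one_mat(3))
  moreover have "dim_row (mat_inv A) = n" using left assms(1) by (metis carrier_matD(2) index_mult_mat(3) index_one_mat(3))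
  ultimately show "mat_inv A \<in> carrier_mat n n" "A * mat_inv A = 1\<^sub>m n" "mat_inv A * A = 1\<^sub>m n"
    using right left by auto
qed

lemma mat_inv_mult_eq_mult_mat_inv:
  assumes "A \<in> carrier_mat n n" "B \<in> carrier_mat n n" "A' \<in> carrier_mat n n" "B' \<in> carrier_mat n n"
    and "invertible_mat A" "invertible_mat B" "B' * A = B * A'"
  shows "mat_inv B * B' = A' * mat_inv A"
proof -
  note inv = mat_inv_inverts[OF assms(1,5)] mat_inv_inverts[OF assms(2,6)]
  have "mat_inv B * B' = mat_inv B * B' * (A * mat_inv A)" using assms inv by simp
  also have "\<dots> = mat_inv B * (B' * A) * mat_inv A"
    using assms(1-4) inv(1,4) by (simp add: assoc_mult_mat[of _ n n _ n _ n])
  also have "\<dots> = mat_inv B * (B * A') * mat_inv A" by (simp only: assms(7))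
  also have "\<dots> = (mat_inv B * B) * (A' * mat_inv A)"
    using assms(1-4) inv(1,4) by (simp add: assoc_mult_mat[of _ n n _ n _ n])
  also have "\<dots> = A' * mat_inv A" using assms inv by simp
  finally show ?thesis .
qed

lemma invertible_mat_if_det_nonzero:
  fixes A :: "'a :: field mat"
  assumes "A \<in> carrier_mat n n" "det A \<noteq> 0"
  shows "invertible_mat A"
proof -
  obtain B where "B \<in> carrier_mat n n" "B * A = 1\<^sub>m n" "A * B = 1\<^sub>m n"
    using det_non_zero_imp_unit[OF assms] unfolding Units_def ring_mat_def by auto
  then show ?thesis unfolding invertible_mat_def inverts_mat_def
    using assms(1) by (intro conjI exI[of _ B]) auto
qed

lemma finite_nonzero_roots_Laurent:
  fixes c :: "'k \<Rightarrow> 'a :: field" and e :: "'k \<Rightarrow> int"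
  assumes "finite K" "\<And>k. k \<in> K \<Longrightarrow> m \<le> e k" "(\<Sum>k | k \<in> K \<and> e k = m. c k) \<noteq> 0"
  shows "finite {z. z \<noteq> 0 \<and> (\<Sum>k\<in>K. c k * z powi e k) = 0}"
proof -
  define p where "p = (\<Sum>k\<in>K. monom (c k) (nat (e k - m)))"
  have poly_p: "poly p z = z powi (- m) * (\<Sum>k\<in>K. c k * z powi e k)" if "z \<noteq> 0" for z
  proof -
    have "poly p z = (\<Sum>k\<in>K. c k * z powi (e k - m))"
      unfolding p_def poly_sum poly_monom
      by (intro sum.cong refl) (simp add: assms(2) power_int_def)
    also have "\<dots> = z powi (- m) * (\<Sum>k\<in>K. c k * z powi e k)"
      using that by (simp add: sum_distrib_left power_int_diff power_int_minus field_simps)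
    finally show ?thesis .
  qed
  have "poly p 0 = (\<Sum>k | k \<in> K \<and> e k = m. c k)"
  proof -
    have "c k * 0 ^ nat (e k - m) = (if e k = m then c k else 0)" if "k \<in> K" for k
      using assms(2)[OF that] by (cases "e k = m") (simp_all add: power_0_left)
    then have "poly p 0 = (\<Sum>k\<in>K. if e k = m then c k else 0)"
      unfolding p_def poly_sum poly_monom by (intro sum.cong refl) simp
    then show ?thesis by (simp add: sum.inter_filter[OF assms(1)])
  qed
  then have "p \<noteq> 0" using assms(3) by auto
  then have "finite {z. poly p z = 0}" by (rule poly_roots_finite)
  moreover have "{z. z \<noteq> 0 \<and> (\<Sum>k\<in>K. c k * z powi e k) = 0} \<subseteq> {z. poly p z = 0}"
    using poly_p by auto
  ultimately show ?thesis by (rule finite_subset[rotated])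
qed

(* A term of the Leibniz expansion of det (DO_mat n a S z): a permutation \<sigma> together with, in
   each row i, one summand a^(g i) T^(g i) of the entry (i, \<sigma> i). *)
definition row_shifts :: "nat \<Rightarrow> int set \<Rightarrow> (nat \<Rightarrow> nat) \<Rightarrow> (nat \<Rightarrow> int) set" where
  "row_shifts n S \<sigma> = PiE {..<n} (\<lambda>i. {j \<in> S. (int i + j - int (\<sigma> i)) mod int n = 0})"

definition shift_exponent :: "nat \<Rightarrow> (nat \<Rightarrow> nat) \<Rightarrow> (nat \<Rightarrow> int) \<Rightarrow> int" where
  "shift_exponent n \<sigma> g = (\<Sum>i<n. (int i + g i - int (\<sigma> i)) div int n)"

definition rotation :: "nat \<Rightarrow> int \<Rightarrow> nat \<Rightarrow> nat" where
  "rotation n j i = (if i < n then nat ((int i + j) mod int n) else i)"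

lemma finite_row_shifts: "finite S \<Longrightarrow> finite (row_shifts n S \<sigma>)"
  unfolding row_shifts_def by (rule finite_PiE) auto

lemma prod_power_int:
  fixes z :: "'a :: field"
  assumes "z \<noteq> 0"
  shows "(\<Prod>i\<in>I. z powi e i) = z powi (\<Sum>i\<in>I. e i)"
  by (induction I rule: infinite_finite_induct) (simp_all add: assms power_int_add)

lemma det_DO_mat_expansion:
  assumes "finite S" "z \<noteq> 0"
  shows "det (DO_mat n a S z) = (\<Sum>(\<sigma>, g) \<in> Sigma {\<sigma>. \<sigma> permutes {..<n}} (row_shifts n S).
     signof \<sigma> * (\<Prod>i<n. a (g i) (int i + 1)) * z powi shift_exponent n \<sigma> g)"
proof -
  have "det (DO_mat n a S z)
      = (\<Sum>\<sigma> | \<sigma> permutes {..<n}. signof \<sigma> * (\<Prod>i<n. DO_mat n a S z $$ (i, \<sigma> i)))"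
    using det_def'[OF DO_mat_carrier] by (simp add: atLeast0LessThan)
  also have "\<dots> = (\<Sum>\<sigma> | \<sigma> permutes {..<n}. \<Sum>g\<in>row_shifts n S \<sigma>.
      signof \<sigma> * (\<Prod>i<n. a (g i) (int i + 1)) * z powi shift_exponent n \<sigma> g)"
  proof (rule sum.cong[OF refl])
    fix \<sigma> assume "\<sigma> \<in> {\<sigma>. \<sigma> permutes {..<n}}"
    then have \<sigma>: "\<sigma> i < n" if "i < n" for i using permutes_in_image that by fastforce
    have "(\<Prod>i<n. DO_mat n a S z $$ (i, \<sigma> i))
        = (\<Prod>i<n. \<Sum>j | j \<in> S \<and> (int i + j - int (\<sigma> i)) mod int n = 0.
        a j (int i + 1) * z powi ((int i + j - int (\<sigma> i)) div int n))"
      using \<sigma> by (intro prod.cong refl) (simp add: DO_mat_def)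
    also have "\<dots> = (\<Sum>g\<in>row_shifts n S \<sigma>.
        \<Prod>i<n. a (g i) (int i + 1) * z powi ((int i + g i - int (\<sigma> i)) div int n))"
      unfolding row_shifts_def using assms(1) by (intro prod_sum_PiE) auto
    also have "\<dots> = (\<Sum>g\<in>row_shifts n S \<sigma>.
        (\<Prod>i<n. a (g i) (int i + 1)) * z powi shift_exponent n \<sigma> g)"
      by (simp add: prod.distrib shift_exponent_def prod_power_int[OF assms(2)])
    finally show "signof \<sigma> * (\<Prod>i<n. DO_mat n a S z $$ (i, \<sigma> i)) = (\<Sum>g\<in>row_shifts n S \<sigma>.
        signof \<sigma> * (\<Prod>i<n. a (g i) (int i + 1)) * z powi shift_exponent n \<sigma> g)"
      by (simp add: sum_distrib_left mult.assoc)
  qed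
  also have "\<dots> = (\<Sum>(\<sigma>, g) \<in> Sigma {\<sigma>. \<sigma> permutes {..<n}} (row_shifts n S).
      signof \<sigma> * (\<Prod>i<n. a (g i) (int i + 1)) * z powi shift_exponent n \<sigma> g)"
    by (rule sum.Sigma) (simp_all add: finite_permutations finite_row_shifts assms(1))
  finally show ?thesis .
qed

lemma shift_exponent_times_n:
  assumes "\<sigma> permutes {..<n}" "g \<in> row_shifts n S \<sigma>"
  shows "int n * shift_exponent n \<sigma> g = (\<Sum>i<n. g i)"
proof -
  have "int n dvd int i + g i - int (\<sigma> i)" if "i < n" for i
    using assms(2) that unfolding row_shifts_def by (auto simp: mod_0_imp_dvd)
  then have "int n * shift_exponent n \<sigma> g = (\<Sum>i<n. int i + g i - int (\<sigma> i))"
    unfolding shift_exponent_def sum_distrib_left by (intro sum.cong refl) simp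
  also have "\<dots> = (\<Sum>i<n. int i) + (\<Sum>i<n. g i) - (\<Sum>i<n. int (\<sigma> i))"
    by (simp add: sum.distrib sum_subtractf)
  also have "(\<Sum>i<n. int (\<sigma> i)) = (\<Sum>i<n. int i)"
    using sum.permutes_inv[OF assms(1)] sum.reindex_bij_betw[OF permutes_imp_bij[OF assms(1)], of int]
    by simp
  finally show ?thesis by simp
qed

lemma Min_le_shift_exponent:
  assumes "n \<ge> 1" "finite S" "\<sigma> permutes {..<n}" "g \<in> row_shifts n S \<sigma>"
  shows "Min S \<le> shift_exponent n \<sigma> g"
proof -
  have "g i \<in> S" if "i < n" for i using assms(4) that unfolding row_shifts_def by auto
  then have "int n * Min S \<le> int n * shift_exponent n \<sigma> g"
    using assms(2) sum_mono[of "{..<n}" "\<lambda>_. Min S" g] shift_exponent_times_n[OF assms(3,4)] by simp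
  moreover have "0 < int n" using assms(1) by simp
  ultimately show ?thesis by (simp add: mult_le_cancel_left_pos)
qed

lemma shift_exponent_eq_Min_imp_const:
  assumes "finite S" "\<sigma> permutes {..<n}" "g \<in> row_shifts n S \<sigma>" "shift_exponent n \<sigma> g = Min S"
  shows "g = restrict (\<lambda>_. Min S) {..<n}"
proof -
  have gS: "g i \<in> S" if "i < n" for i using assms(3) that unfolding row_shifts_def by auto
  have "(\<Sum>i<n. g i - Min S) = (\<Sum>i<n. g i) - int n * Min S" by (simp add: sum_subtractf)
  also have "\<dots> = 0" using shift_exponent_times_n[OF assms(2,3)] assms(4) by simp
  finally have "g i = Min S" if "i < n" for i
    using that gS assms(1) sum_nonneg_eq_0_iff[of "{..<n}" "\<lambda>i. g i - Min S"] by auto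
  moreover have "g \<in> extensional {..<n}" using assms(3) unfolding row_shifts_def by (simp add: PiE_iff)
  ultimately show ?thesis by (auto simp: extensional_def)
qed

lemma row_shifts_const_imp_rotation:
  assumes "\<sigma> permutes {..<n}" "restrict (\<lambda>_. j) {..<n} \<in> row_shifts n S \<sigma>"
  shows "\<sigma> = rotation n j"
proof
  fix i show "\<sigma> i = rotation n j i"
  proof (cases "i < n")
    case True
    then have "(int i + j - int (\<sigma> i)) mod int n = 0"
      using assms(2) unfolding row_shifts_def by auto
    then have "int n dvd int i + j - int (\<sigma> i)" by (simp add: mod_0_imp_dvd)
    then have "int (\<sigma> i) mod int n = (int i + j) mod int n"
      by (simp add: mod_eq_dvd_iff dvd_diff_commute)
    moreover have "\<sigma> i < n" using permutes_in_image[OF assms(1)] True by simp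
    ultimately show ?thesis using True by (simp add: rotation_def)
  next
    case False
    then show ?thesis using permutes_not_in[OF assms(1)] by (simp add: rotation_def)
  qed
qed

lemma rotation_permutes: "rotation n j permutes {..<n}"
proof -
  have rot: "int (rotation n j i) = (int i + j) mod int n" "rotation n j i < n" if "i < n" for i
    using that by (auto simp: rotation_def nat_less_iff)
  have "inj_on (rotation n j) {..<n}"
  proof (rule inj_onI)
    fix i i' assume "i \<in> {..<n}" "i' \<in> {..<n}" "rotation n j i = rotation n j i'"
    then have "i < n" "i' < n" "(int i + j) mod int n = (int i' + j) mod int n"
      using rot(1)[of i] rot(1)[of i'] by auto
    then have "int n dvd int i - int i'" by (simp add: mod_eq_dvd_iff)
    then have "int i mod int n = int i' mod int n" by (simp add: mod_eq_dvd_iff)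
    then show "i = i'" using \<open>i < n\<close> \<open>i' < n\<close> by simp
  qed
  moreover have "rotation n j ` {..<n} \<subseteq> {..<n}" using rot by auto
  ultimately have "bij_betw (rotation n j) {..<n} {..<n}"
    by (simp add: bij_betw_def endo_inj_surj)
  then show ?thesis by (rule bij_imp_permutes) (simp add: rotation_def)
qed

lemma const_in_row_shifts_rotation:
  assumes "j \<in> S"
  shows "restrict (\<lambda>_. j) {..<n} \<in> row_shifts n S (rotation n j)"
proof -
  have "(int i + j - int (rotation n j i)) mod int n = 0" if "i < n" for i
  proof -
    have "int (rotation n j i) = (int i + j) mod int n" using that by (simp add: rotation_def)
    then show ?thesis by (simp only: mod_diff_right_eq) simp
  qed
  then show ?thesis unfolding row_shifts_def using assms by auto
qed

lemma finite_singular_DO_mat: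
  assumes "n \<ge> 1" "finite S" "S \<noteq> {}" "\<And>i. a (Min S) i \<noteq> 0"
  shows "finite {z. z \<noteq> 0 \<and> \<not> invertible_mat (DO_mat n a S z)}"
proof -
  define K where "K = Sigma {\<sigma>. \<sigma> permutes {..<n}} (row_shifts n S)"
  define c where "c = (\<lambda>(\<sigma>, g). signof \<sigma> * (\<Prod>i<n. a (g i) (int i + 1)) :: real)"
  define e where "e = (\<lambda>(\<sigma>, g). shift_exponent n \<sigma> g)"
  define g0 where "g0 = restrict (\<lambda>_. Min S) {..<n}"
  have MinS: "Min S \<in> S" using assms(2,3) by simp
  have leading: "{k. k \<in> K \<and> e k = Min S} = {(rotation n (Min S), g0)}"
  proof -
    have g0: "g0 \<in> row_shifts n S (rotation n (Min S))"
      unfolding g0_def by (rule const_in_row_shifts_rotation[OF MinS])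
    have "int n * e (rotation n (Min S), g0) = int n * Min S"
      using shift_exponent_times_n[OF rotation_permutes g0] by (simp add: e_def g0_def)
    then have "e (rotation n (Min S), g0) = Min S" using assms(1) by simp
    moreover have "k = (rotation n (Min S), g0)" if "k \<in> K" "e k = Min S" for k
      using that shift_exponent_eq_Min_imp_const[OF assms(2)] row_shifts_const_imp_rotation
      unfolding K_def e_def g0_def by fastforce
    ultimately show ?thesis using g0 rotation_permutes unfolding K_def by auto
  qed
  have "(\<Sum>k | k \<in> K \<and> e k = Min S. c k) \<noteq> 0"
    unfolding leading using assms(4) by (simp add: c_def g0_def sign_def)
  then have "finite {z. z \<noteq> 0 \<and> (\<Sum>k\<in>K. c k * z powi e k) = 0}"
    using finite_nonzero_roots_Laurent[where K = K and e = e and m = "Min S" and c = c] Min_le_shift_exponent[OF assms(1,2)]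
    by (auto simp: K_def e_def finite_permutations finite_row_shifts assms(2))
  moreover have "(\<Sum>k\<in>K. c k * z powi e k) = 0" if "z \<noteq> 0" "\<not> invertible_mat (DO_mat n a S z)" for z
  proof -
    have "det (DO_mat n a S z) = 0" using that(2) invertible_mat_if_det_nonzero[OF DO_mat_carrier] by blast
    then show ?thesis
      using det_DO_mat_expansion[OF assms(2) that(1)] by (simp add: K_def c_def e_def split_def)
  qed
  then have "{z. z \<noteq> 0 \<and> \<not> invertible_mat (DO_mat n a S z)}
      \<subseteq> {z. z \<noteq> 0 \<and> (\<Sum>k\<in>K. c k * z powi e k) = 0}" by blast
  ultimately show ?thesis by (rule finite_subset[rotated])
qed

lemma corresponds_generic_coeff_nonzero:
  assumes "finite J" "corresponds_generic n J a" "j \<in> J"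
  shows "a j i \<noteq> 0"
proof
  assume zero: "a j i = 0"
  define m where "m = nat (Max J - Min J)"
  from assms(2) obtain V where generic: "generic_corrugated m J V"
    and annihilated: "\<forall>k < m. \<forall>i. DO_apply a J (\<lambda>l. V l $ k) i = 0"
    and nonzero: "\<forall>i. \<exists>j\<in>J. a j i \<noteq> 0"
    unfolding corresponds_generic_def m_def by blast
  obtain j' where j': "j' \<in> J" "a j' i \<noteq> 0" using nonzero by blast
  have "lin_dep_family m (J - {j}) (\<lambda>l. V (i + l))"
    unfolding lin_dep_family_def
  proof (intro exI[of _ "\<lambda>l. a l i"] conjI allI impI)
    show "\<exists>l\<in>J - {j}. a l i \<noteq> 0" using j' zero by blast
    fix k assume "k < m"
    have "(\<Sum>l\<in>J - {j}. a l i * V (i + l) $ k) = DO_apply a J (\<lambda>l. V l $ k) i"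
      using sum.remove[OF assms(1,3), of "\<lambda>l. a l i * V (i + l) $ k"] zero
      by (simp add: DO_apply_def)
    then show "(\<Sum>l\<in>J - {j}. a l i * V (i + l) $ k) = 0" using annihilated \<open>k < m\<close> by simp
  qed
  then show False using generic assms(3) unfolding generic_corrugated_def by blast
qed

lemma arith_prog_finite_nonempty:
  assumes "arith_prog A k"
  shows "finite A" "A \<noteq> {}"
proof -
  obtain a and p :: nat where p: "p \<ge> 1" "A = {a + int m * k | m. m < p}"
    using assms unfolding arith_prog_def by blast
  then have "A = (\<lambda>m. a + int m * k) ` {..<p}" by auto
  then show "finite A" by simp
  have "0 < p" using p(1) by simp
  then show "A \<noteq> {}" unfolding p(2) by blast
qed

theorem mainTheorem8:
  fixes n :: nat and Jm Jp :: "int set" and k :: int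
    and a b :: "int \<Rightarrow> int \<Rightarrow> real"
  assumes "n \<ge> 1"
    and "k > 0" and "arith_prog Jm k" and "arith_prog Jp k"
    and "Jm \<inter> Jp = {}"
    and "periodic_coeffs n a" and "periodic_coeffs n b"
    and "corresponds_generic n (Jm \<union> Jp) a"
    and "\<forall>V. DO_apply b Jp (DO_apply a Jm V) = DO_apply b Jm (DO_apply a Jp V)"
  shows "finite {z. z \<noteq> 0 \<and> \<not> invertible_mat (DO_mat n a Jm z)}
    \<and> (\<forall>z. z \<noteq> 0 \<and> invertible_mat (DO_mat n a Jm z) \<and> invertible_mat (DO_mat n b Jm z) \<longrightarrow>
         mat_inv (DO_mat n b Jm z) * DO_mat n b Jp z
           = DO_mat n a Jp z * mat_inv (DO_mat n a Jm z))"
proof -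
  have Jm: "finite Jm" "Jm \<noteq> {}" and Jp: "finite Jp"
    using arith_prog_finite_nonempty assms(3,4) by blast+
  have "a (Min Jm) i \<noteq> 0" for i
    using corresponds_generic_coeff_nonzero[OF _ assms(8)] Jm Jp by simp
  then have "finite {z. z \<noteq> 0 \<and> \<not> invertible_mat (DO_mat n a Jm z)}"
    by (rule finite_singular_DO_mat[OF assms(1) Jm])
  moreover have "mat_inv (DO_mat n b Jm z) * DO_mat n b Jp z = DO_mat n a Jp z * mat_inv (DO_mat n a Jm z)"
    if "z \<noteq> 0" "invertible_mat (DO_mat n a Jm z)" "invertible_mat (DO_mat n b Jm z)" for z
  proof (rule mat_inv_mult_eq_mult_mat_inv[OF DO_mat_carrier DO_mat_carrier DO_mat_carrier DO_mat_carrier that(2,3)])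
    show "DO_mat n b Jp z * DO_mat n a Jm z = DO_mat n b Jm z * DO_mat n a Jp z"
      using DO_mat_mult_eqI[OF assms(1) that(1) Jm(1) Jp Jp Jm(1) assms(6,6)] assms(9) by blast
  qed
  ultimately show ?thesis by blast
qed

end
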